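(* Let $m\ge 2$ and let $n_1,\dots,n_m\ge 5$ be odd. Then the strong metric dimension of the odd chain cycle satisfies $$sdim(\mathcal{C}(C_{n_1},\dots,C_{n_m}))=m-1+\left\lfloor\frac{n_1}{2}\right\rfloor+\left\lfloor\frac{n_m}{2}\right\rfloor+\sum_{i=2}^{m-1}\left\lfloor\frac{n_i-2}{2}\right\rfloor.$$
   Context: Let $C_{n_1},\dots,C_{n_m}$ be pairwise disjoint cycles, $V(C_{n_i})=\{v^i_1,\dots,v^i_{n_i}\}$ with $v^i_j$ adjacent to $v^i_{j+1}$ (indices mod $n_i$). The odd chain cycle (all $n_i$ odd) is obtained by identifying $v^i_{(n_i+1)/2+1}$ with $v^{i+1}_1$ for $i=1,\dots,m-1$. A vertex $w$ strongly resolves distinct vertices $u,v$ if $u$ lies on some shortest $v$–$w$ path or $v$ lies on some shortest $u$–$w$ path. A set $W\subseteq V(G)$ is a strong resolving set if every pair of distinct vertices is strongly resolved by some $w\in W$; $sdim(G)$ is the minimum size of a strong resolving set. *)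

theory Defs
  imports Main
begin

definition is_walk :: "('a \<Rightarrow> 'a \<Rightarrow> bool) \<Rightarrow> 'a list \<Rightarrow> bool" where
  "is_walk E xs \<longleftrightarrow> xs \<noteq> [] \<and> (\<forall>k. Suc k < length xs \<longrightarrow> E (xs ! k) (xs ! Suc k))"

definition walk_of_len :: "'a set \<Rightarrow> ('a \<Rightarrow> 'a \<Rightarrow> bool) \<Rightarrow> 'a \<Rightarrow> 'a \<Rightarrow> nat \<Rightarrow> 'a list \<Rightarrow> bool" where
  "walk_of_len V E u v k xs \<longleftrightarrow> is_walk E xs \<and> set xs \<subseteq> V \<and> hd xs = u \<and> last xs = v \<and> length xs = Suc k"

definition gdist :: "'a set \<Rightarrow> ('a \<Rightarrow> 'a \<Rightarrow> bool) \<Rightarrow> 'a \<Rightarrow> 'a \<Rightarrow> nat" where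
  "gdist V E u v = (LEAST k. \<exists>xs. walk_of_len V E u v k xs)"

definition shortest_path :: "'a set \<Rightarrow> ('a \<Rightarrow> 'a \<Rightarrow> bool) \<Rightarrow> 'a \<Rightarrow> 'a \<Rightarrow> 'a list \<Rightarrow> bool" where
  "shortest_path V E u v xs \<longleftrightarrow> walk_of_len V E u v (gdist V E u v) xs"

definition strongly_resolves :: "'a set \<Rightarrow> ('a \<Rightarrow> 'a \<Rightarrow> bool) \<Rightarrow> 'a \<Rightarrow> 'a \<Rightarrow> 'a \<Rightarrow> bool" where
  "strongly_resolves V E w u v \<longleftrightarrow>
     (\<exists>xs. shortest_path V E v w xs \<and> u \<in> set xs) \<or> (\<exists>xs. shortest_path V E u w xs \<and> v \<in> set xs)"

definition strong_resolving_set :: "'a set \<Rightarrow> ('a \<Rightarrow> 'a \<Rightarrow> bool) \<Rightarrow> 'a set \<Rightarrow> bool" where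
  "strong_resolving_set V E W \<longleftrightarrow> W \<subseteq> V \<and>
     (\<forall>u\<in>V. \<forall>v\<in>V. u \<noteq> v \<longrightarrow> (\<exists>w\<in>W. strongly_resolves V E w u v))"

definition sdim :: "'a set \<Rightarrow> ('a \<Rightarrow> 'a \<Rightarrow> bool) \<Rightarrow> nat" where
  "sdim V E = (LEAST k. \<exists>W. finite W \<and> strong_resolving_set V E W \<and> card W = k)"

(* Vertex v^i_j is represented by (i,j), 1 \<le> i \<le> m, 1 \<le> j \<le> n i.
   The identification v^{i}_{(n_i+1)/2+1} = v^{i+1}_1 is realised by mapping (i+1,1)
   to the canonical representative (i, (n_i+1)/2+1). *)
definition canon :: "(nat \<Rightarrow> nat) \<Rightarrow> nat \<times> nat \<Rightarrow> nat \<times> nat" where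
  "canon n p = (case p of (i, j) \<Rightarrow>
      if j = 1 \<and> i \<ge> 2 then (i - 1, (n (i - 1) + 1) div 2 + 1) else (i, j))"

definition chain_V :: "nat \<Rightarrow> (nat \<Rightarrow> nat) \<Rightarrow> (nat \<times> nat) set" where
  "chain_V m n = canon n ` {(i, j). 1 \<le> i \<and> i \<le> m \<and> 1 \<le> j \<and> j \<le> n i}"

definition chain_E :: "nat \<Rightarrow> (nat \<Rightarrow> nat) \<Rightarrow> nat \<times> nat \<Rightarrow> nat \<times> nat \<Rightarrow> bool" where
  "chain_E m n u v \<longleftrightarrow> (\<exists>i\<in>{1..m}. \<exists>j\<in>{1..n i}.
      (u = canon n (i, j) \<and> v = canon n (i, j mod n i + 1)) \<or>
      (v = canon n (i, j) \<and> u = canon n (i, j mod n i + 1)))"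

end

theory Submission
  imports Defs
begin

text \<open>
  Write \<open>n\<^sub>i = 2k\<^sub>i + 1\<close>. The distance between two vertices of the chain is the sum, over all
  cycles \<open>i\<close>, of the cyclic distance between their shadows on cycle \<open>i\<close> (a vertex outside
  cycle \<open>i\<close> casts its shadow on the cut vertex through which it is reached). By the theorem of
  Oellermann and Peters-Fransen, a set is strong resolving iff it meets every pair of mutually
  maximally distant vertices, so everything reduces to determining these pairs. They are
  (a) the antipodal pairs (cyclic distance \<open>k\<^sub>i\<close>) within one cycle avoiding the cut vertices, and
  (b) the pairs formed by a vertex next to the left end of cycle \<open>a\<close> and a vertex next to the
  right end of a later cycle \<open>c\<close>. The antipodal pairs of \<open>C\<^sub>2\<^sub>k\<^sub>+\<^sub>1\<close> form one Hamiltonian cycle, which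
  the cut vertices break into paths; a vertex cover of a path on \<open>p\<close> vertices has at least
  \<open>\<lfloor>p/2\<rfloor>\<close> elements, with one more unless both ends are left out. The pairs (b) force this
  extra element on all cycles but one, and an explicit set attains the resulting bound.
\<close>

definition cyc_dist :: "nat \<Rightarrow> nat \<Rightarrow> nat \<Rightarrow> nat" where
  "cyc_dist N x y = (let d = max x y - min x y in min d (N - d))"

definition cyc_succ :: "nat \<Rightarrow> nat \<Rightarrow> nat" where
  "cyc_succ N j = (if j = N then 1 else j + 1)"

definition cyc_pred :: "nat \<Rightarrow> nat \<Rightarrow> nat" where
  "cyc_pred N j = (if j = 1 then N else j - 1)"

lemma cyc_dist_of_le: "x \<le> y \<Longrightarrow> cyc_dist N x y = min (y - x) (N - (y - x))"
  by (simp add: cyc_dist_def max_def min_def)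

lemma cyc_dist_of_ge: "y \<le> x \<Longrightarrow> cyc_dist N x y = min (x - y) (N - (x - y))"
  by (simp add: cyc_dist_def max_def min_def)

lemma cyc_dist_self [simp]: "cyc_dist N x x = 0"
  by (simp add: cyc_dist_def)

lemma cyc_dist_commute: "cyc_dist N x y = cyc_dist N y x"
  by (simp add: cyc_dist_def max.commute min.commute)

lemma cyc_dist_triangle:
  assumes "x \<le> N" "y \<le> N" "z \<le> N"
  shows "cyc_dist N x z \<le> cyc_dist N x y + cyc_dist N y z"
proof -
  have subadd: "min (a + b) (N - (a + b)) \<le> min a (N - a) + min b (N - b)"
    and shift: "min b (N - b) \<le> min a (N - a) + min (a + b) (N - (a + b))"
    if "a + b \<le> N" for a b :: nat
    using that unfolding min_def by (simp_all only: split: if_split; linarith)+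
  have "cyc_dist N x z \<le> cyc_dist N x y + cyc_dist N y z" if "x \<le> z" "y \<le> N" "z \<le> N" for x y z
  proof -
    consider "y \<le> x" | "x \<le> y" "y \<le> z" | "z \<le> y" using that by linarith
    then show ?thesis
    proof cases
      case 1
      then show ?thesis using shift[of "x - y" "z - x"] that
        by (simp add: cyc_dist_of_le cyc_dist_of_ge)
    next
      case 2
      then show ?thesis using subadd[of "y - x" "z - y"] that
        by (simp add: cyc_dist_of_le cyc_dist_of_ge)
    next
      case 3
      then show ?thesis using shift[of "y - z" "z - x"] that
        by (simp add: cyc_dist_of_le cyc_dist_of_ge add.commute)
    qed
  qed
  from this[of x z y] this[of z x y] assms show ?thesis
    by (metis cyc_dist_commute add.commute nat_le_linear)
qed

lemma cyc_dist_le_half: "cyc_dist N x y \<le> N div 2"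
proof -
  have "min d (N - d) \<le> N div 2" for d :: nat
    by (simp add: min_def) linarith
  then show ?thesis by (simp add: cyc_dist_def Let_def)
qed

lemma cyc_dist_eq_diff: "x \<le> y \<Longrightarrow> y - x \<le> K \<Longrightarrow> N = 2 * K + 1 \<Longrightarrow> cyc_dist N x y = y - x"
  by (simp add: cyc_dist_of_le min_def)

lemma cyc_succ_range: "1 \<le> j \<Longrightarrow> j \<le> N \<Longrightarrow> 1 \<le> cyc_succ N j \<and> cyc_succ N j \<le> N"
  by (auto simp: cyc_succ_def)

lemma cyc_pred_range: "1 \<le> j \<Longrightarrow> j \<le> N \<Longrightarrow> 1 \<le> cyc_pred N j \<and> cyc_pred N j \<le> N"
  by (auto simp: cyc_pred_def)

lemma cyc_succ_pred: "1 \<le> j \<Longrightarrow> j \<le> N \<Longrightarrow> cyc_succ N (cyc_pred N j) = j"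
  by (auto simp: cyc_succ_def cyc_pred_def)

lemma Suc_mod_eq_cyc_succ: "1 \<le> j \<Longrightarrow> j \<le> N \<Longrightarrow> Suc (j mod N) = cyc_succ N j"
  by (auto simp: cyc_succ_def)

lemma cyc_dist_succ: "3 \<le> N \<Longrightarrow> 1 \<le> j \<Longrightarrow> j \<le> N \<Longrightarrow> cyc_dist N j (cyc_succ N j) = 1"
  by (cases "j = N") (auto simp: cyc_succ_def cyc_dist_of_le cyc_dist_of_ge min_def)

lemma cyc_dist_decrease:
  assumes "1 \<le> x" "x \<le> N" "1 \<le> y" "y \<le> N" "x \<noteq> y"
  shows "cyc_dist N x (cyc_succ N y) + 1 = cyc_dist N x y \<or> cyc_dist N x (cyc_pred N y) + 1 = cyc_dist N x y"
proof (cases "x < y")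
  case True
  show ?thesis
  proof (cases "y - x \<le> N - (y - x)")
    case short: True
    then have "cyc_dist N x (cyc_pred N y) = y - 1 - x" "cyc_dist N x y = y - x"
      using True assms by (simp_all add: cyc_pred_def cyc_dist_of_le min_def)
    then show ?thesis using True by arith
  next
    case long: False
    then have "cyc_dist N x (cyc_succ N y) = N - (y - x) - 1" "cyc_dist N x y = N - (y - x)"
      using True assms by (cases "y = N"; simp add: cyc_succ_def cyc_dist_of_le cyc_dist_of_ge min_def)+
    then show ?thesis using long True assms by arith
  qed
next
  case False
  then have less: "y < x" using assms by simp
  show ?thesis
  proof (cases "x - y \<le> N - (x - y)")
    case short: True
    then have "cyc_dist N x (cyc_succ N y) = x - y - 1" "cyc_dist N x y = x - y"
      using less assms by (simp_all add: cyc_succ_def cyc_dist_of_ge min_def)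
    then show ?thesis using less by arith
  next
    case long: False
    then have "cyc_dist N x (cyc_pred N y) = N - (x - y) - 1" "cyc_dist N x y = N - (x - y)"
      using less assms by (cases "y = 1"; simp add: cyc_pred_def cyc_dist_of_le cyc_dist_of_ge min_def)+
    then show ?thesis using long less assms by arith
  qed
qed

lemma is_walk_Cons_Cons: "is_walk E (x # y # xs) \<longleftrightarrow> E x y \<and> is_walk E (y # xs)"
  unfolding is_walk_def by (auto simp: less_Suc_eq_0_disj nth_Cons split: nat.split)

lemma is_walk_append: "is_walk E ys \<Longrightarrow> is_walk E zs \<Longrightarrow> last ys = hd zs \<Longrightarrow> is_walk E (ys @ tl zs)"
proof (induction ys rule: induct_list012)
  case 1
  then show ?case by (simp add: is_walk_def)
next
  case (2 x)
  then show ?case by (cases zs) auto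
next
  case (3 x y ys)
  then show ?case by (simp add: is_walk_Cons_Cons)
qed

lemma is_walk_take: "is_walk E xs \<Longrightarrow> 0 < i \<Longrightarrow> is_walk E (take i xs)"
  unfolding is_walk_def by auto

lemma is_walk_drop: "is_walk E xs \<Longrightarrow> i < length xs \<Longrightarrow> is_walk E (drop i xs)"
  unfolding is_walk_def by auto

text \<open>
  A function \<open>D\<close> that vanishes on the diagonal, is symmetric, satisfies the triangle inequality,
  grows by at most one along an edge and can always be decreased by one along an edge is the
  graph distance.
\<close>

locale graph_distance =
  fixes V :: "'a set" and E :: "'a \<Rightarrow> 'a \<Rightarrow> bool" and D :: "'a \<Rightarrow> 'a \<Rightarrow> nat"
  assumes finite_V: "finite V"
    and E_sym: "E u v \<Longrightarrow> E v u"
    and E_in_V: "E u v \<Longrightarrow> u \<in> V \<and> v \<in> V"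
    and D_self: "D p p = 0"
    and D_sym: "p \<in> V \<Longrightarrow> q \<in> V \<Longrightarrow> D p q = D q p"
    and D_triangle: "p \<in> V \<Longrightarrow> q \<in> V \<Longrightarrow> r \<in> V \<Longrightarrow> D p r \<le> D p q + D q r"
    and D_edge: "p \<in> V \<Longrightarrow> E q r \<Longrightarrow> D p r \<le> D p q + 1"
    and D_descent: "p \<in> V \<Longrightarrow> q \<in> V \<Longrightarrow> p \<noteq> q \<Longrightarrow> \<exists>r. E q r \<and> D p r + 1 = D p q"
begin

lemma walk_of_len_D_exists: "p \<in> V \<Longrightarrow> q \<in> V \<Longrightarrow> \<exists>xs. walk_of_len V E p q (D p q) xs"
proof (induction "D p q" arbitrary: q)
  case 0
  then have "p = q" using D_descent by fastforce
  then show ?case using 0 by (intro exI[of _ "[p]"]) (simp add: walk_of_len_def is_walk_def D_self)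
next
  case (Suc d)
  then have "p \<noteq> q" using D_self by force
  then obtain r where r: "E q r" "D p r + 1 = D p q" using D_descent Suc.prems by blast
  then have "r \<in> V" "D p r = d" using E_in_V Suc.hyps(2) by auto
  then obtain xs where xs: "walk_of_len V E p r d xs" using Suc.hyps(1) Suc.prems by auto
  have "is_walk E [r, q]" using E_sym[OF r(1)] by (simp add: is_walk_Cons_Cons is_walk_def)
  then have "walk_of_len V E p q (D p q) (xs @ tl [r, q])"
    using xs is_walk_append[of E xs "[r, q]"] Suc.prems Suc.hyps(2)
    unfolding walk_of_len_def by (auto simp: is_walk_def)
  then show ?case by blast
qed

lemma D_le_walk_length: "is_walk E xs \<Longrightarrow> set xs \<subseteq> V \<Longrightarrow> D (hd xs) (last xs) \<le> length xs - 1"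
proof (induction xs rule: induct_list012)
  case 1
  then show ?case by (simp add: is_walk_def)
next
  case (2 x)
  then show ?case by (simp add: D_self)
next
  case (3 x y ys)
  then have "E x y" "D y (last (y # ys)) \<le> length ys" by (auto simp: is_walk_Cons_Cons)
  moreover have "D x y \<le> 1" using D_edge[of x x y] \<open>E x y\<close> 3(4) by (simp add: D_self)
  moreover have "D x (last (y # ys)) \<le> D x y + D y (last (y # ys))"
    using D_triangle 3(4) by (metis insert_subset last_in_set list.distinct(1) list.simps(15) subset_iff)
  ultimately show ?case by simp
qed

lemma gdist_eq_D: "p \<in> V \<Longrightarrow> q \<in> V \<Longrightarrow> gdist V E p q = D p q"
  unfolding gdist_def
proof (rule Least_equality)
  fix k assume "\<exists>xs. walk_of_len V E p q k xs"
  then show "D p q \<le> k" using D_le_walk_length unfolding walk_of_len_def by fastforce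
qed (rule walk_of_len_D_exists)

lemma D_shortest_path_nth:
  assumes "v \<in> V" "w \<in> V" "shortest_path V E v w xs" "i < length xs"
  shows "D v (xs ! i) = i"
proof -
  have xs: "is_walk E xs" "set xs \<subseteq> V" "hd xs = v" "last xs = w" "length xs = Suc (D v w)"
    using assms gdist_eq_D unfolding shortest_path_def walk_of_len_def by auto
  have "last (take (Suc i) xs) = xs ! i"
    using assms(4) by (subst last_conv_nth) (auto simp: min_def intro: arg_cong[where f = "nth xs"])
  then have "D v (xs ! i) \<le> i"
    using D_le_walk_length[of "take (Suc i) xs"] is_walk_take[OF xs(1)] xs(2,3) assms(4)
    by (auto dest: in_set_takeD)
  moreover have "D (xs ! i) w \<le> length xs - 1 - i"
    using D_le_walk_length[of "drop i xs"] is_walk_drop[OF xs(1)] xs(2,4) assms(4)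
    by (auto simp: hd_drop_conv_nth dest: in_set_dropD)
  moreover have "D v w \<le> D v (xs ! i) + D (xs ! i) w"
    using D_triangle assms(1,2,4) xs(2) nth_mem by blast
  ultimately show ?thesis using xs(5) assms(4) by linarith
qed

lemma shortest_path_through:
  assumes "x \<in> V" "u \<in> V" "v \<in> V" "D v x = D v u + D u x"
  shows "\<exists>xs. shortest_path V E v x xs \<and> u \<in> set xs"
proof -
  obtain ys where ys: "walk_of_len V E v u (D v u) ys" using walk_of_len_D_exists assms by blast
  obtain zs where zs: "walk_of_len V E u x (D u x) zs" using walk_of_len_D_exists assms by blast
  have "ys \<noteq> []" "zs \<noteq> []" using ys zs unfolding walk_of_len_def is_walk_def by auto
  moreover have "last (ys @ tl zs) = last zs" using ys zs \<open>zs \<noteq> []\<close> unfolding walk_of_len_def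
    by (cases zs; cases "tl zs") auto
  ultimately have "walk_of_len V E v x (D v x) (ys @ tl zs)"
    using ys zs is_walk_append[of E ys zs] assms(4) unfolding walk_of_len_def
    by (auto dest: list.set_sel(2))
  moreover have "u \<in> set (ys @ tl zs)" using ys \<open>ys \<noteq> []\<close> unfolding walk_of_len_def by auto
  ultimately show ?thesis unfolding shortest_path_def using gdist_eq_D assms by auto
qed

definition maximally_distant :: "'a \<Rightarrow> 'a \<Rightarrow> bool" where
  "maximally_distant u v \<longleftrightarrow> (\<forall>z. E u z \<longrightarrow> D v z \<le> D v u)"

definition mutually_maximally_distant :: "'a \<Rightarrow> 'a \<Rightarrow> bool" where
  "mutually_maximally_distant u v \<longleftrightarrow> maximally_distant u v \<and> maximally_distant v u"

lemma not_maximally_distantI: "E u z \<Longrightarrow> D v u < D v z \<Longrightarrow> \<not> maximally_distant u v"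
  unfolding maximally_distant_def by force

lemma shortest_path_maximally_distant_last:
  assumes "u \<in> V" "v \<in> V" "w \<in> V" "maximally_distant u v" "shortest_path V E v w xs" "u \<in> set xs"
  shows "w = u"
proof (rule ccontr)
  assume "w \<noteq> u"
  obtain i where i: "i < length xs" "xs ! i = u" using assms(6) by (meson in_set_conv_nth)
  have xs: "is_walk E xs" "last xs = w"
    using assms unfolding shortest_path_def walk_of_len_def by auto
  then have "Suc i < length xs" using \<open>w \<noteq> u\<close> i by (metis Suc_lessI last_conv_nth list.size(3) not_less0 diff_Suc_1)
  then have "E u (xs ! Suc i)" "D v (xs ! Suc i) = Suc i" "D v u = i"
    using xs(1) i D_shortest_path_nth[OF assms(2,3,5)] unfolding is_walk_def by auto
  then show False using assms(4) unfolding maximally_distant_def by force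
qed

lemma strong_resolving_set_meets_mmd:
  assumes "strong_resolving_set V E W" "u \<in> V" "v \<in> V" "u \<noteq> v" "mutually_maximally_distant u v"
  shows "u \<in> W \<or> v \<in> W"
proof -
  obtain w where w: "w \<in> W" "strongly_resolves V E w u v"
    using assms unfolding strong_resolving_set_def by blast
  then have "w \<in> V" using assms(1) unfolding strong_resolving_set_def by blast
  with w(2) have "w = u \<or> w = v"
    using shortest_path_maximally_distant_last assms(2,3,5)
    unfolding strongly_resolves_def mutually_maximally_distant_def by blast
  then show ?thesis using w by blast
qed

text \<open>
  Extending a geodesic through \<open>u\<close> and \<open>v\<close> as far as possible at both ends yields a mutually
  maximally distant pair.
\<close>

lemma mmd_pair_extending:
  assumes "u \<in> V" "v \<in> V" "u \<noteq> v"
  obtains x y where "x \<in> V" "y \<in> V" "x \<noteq> y" "mutually_maximally_distant x y"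
    "D x y = D x u + D u v + D v y"
proof -
  define S where "S = {(x, y). x \<in> V \<and> y \<in> V \<and> D x y = D x u + D u v + D v y}"
  have "(u, v) \<in> S" using assms by (simp add: S_def D_self)
  moreover have fin: "finite S" by (rule finite_subset[of S "V \<times> V"]) (auto simp: S_def finite_V)
  ultimately obtain x y where xy: "(x, y) \<in> S" "Max ((\<lambda>(a, b). D a b) ` S) = D x y"
    using obtains_MAX[of S "\<lambda>(a, b). D a b"] by (metis empty_iff prod.case surj_pair)
  then have max: "D a b \<le> D x y" if "(a, b) \<in> S" for a b
    using Max_ge[OF finite_imageI[OF fin], of "D a b" "\<lambda>(a, b). D a b"] that by force
  from xy have V: "x \<in> V" "y \<in> V" and Dxy: "D x y = D x u + D u v + D v y" by (auto simp: S_def)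
  have "maximally_distant x y" unfolding maximally_distant_def
  proof (intro allI impI, rule ccontr)
    fix z assume e: "E x z" and "\<not> D y z \<le> D y x"
    have "z \<in> V" using E_in_V e by blast
    then have "D z y \<le> D z u + D u v + D v y"
      using D_triangle[OF _ assms(1) V(2)] D_triangle[OF assms(1,2) V(2)] by fastforce
    moreover have "D u z \<le> D u x + 1" using D_edge[OF assms(1) e] .
    ultimately have "(z, y) \<in> S" "D z y > D x y"
      using D_edge[OF V(2) e] Dxy \<open>\<not> D y z \<le> D y x\<close> \<open>z \<in> V\<close> D_sym V assms unfolding S_def by auto
    then show False using max by force
  qed
  moreover have "maximally_distant y x" unfolding maximally_distant_def
  proof (intro allI impI, rule ccontr)
    fix z assume e: "E y z" and "\<not> D x z \<le> D x y"
    have "z \<in> V" using E_in_V e by blast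
    then have "D x z \<le> D x u + D u v + D v z"
      using D_triangle[OF V(1) assms(1)] D_triangle[OF assms(1,2)] by fastforce
    moreover have "D v z \<le> D v y + 1" using D_edge[OF assms(2) e] .
    ultimately have "(x, z) \<in> S" "D x z > D x y"
      using D_edge[OF V(1) e] Dxy \<open>\<not> D x z \<le> D x y\<close> \<open>z \<in> V\<close> V unfolding S_def by auto
    then show False using max by force
  qed
  moreover have "x \<noteq> y" using Dxy D_self D_descent assms by fastforce
  ultimately show ?thesis using that V Dxy unfolding mutually_maximally_distant_def by blast
qed

lemma strong_resolving_setI_mmd:
  assumes "W \<subseteq> V"
    and meets: "\<And>u v. u \<in> V \<Longrightarrow> v \<in> V \<Longrightarrow> u \<noteq> v \<Longrightarrow> mutually_maximally_distant u v \<Longrightarrow>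
                  u \<in> W \<or> v \<in> W"
  shows "strong_resolving_set V E W"
  unfolding strong_resolving_set_def
proof (intro conjI ballI impI)
  fix u v assume uv: "u \<in> V" "v \<in> V" "u \<noteq> v"
  obtain x y where xy: "x \<in> V" "y \<in> V" "x \<in> W \<or> y \<in> W" and Dxy: "D x y = D x u + D u v + D v y"
    using mmd_pair_extending[OF uv] meets by metis
  have "D x v \<le> D x u + D u v" "D x y \<le> D x v + D v y" "D u y \<le> D u v + D v y" "D x y \<le> D x u + D u y"
    using D_triangle xy uv by auto
  then have "D v x = D v u + D u x" "D u y = D u v + D v y" using Dxy D_sym xy uv by auto
  then show "\<exists>w\<in>W. strongly_resolves V E w u v"
    using xy shortest_path_through[OF xy(1) uv(1,2)] shortest_path_through[OF xy(2) uv(2,1)]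
    unfolding strongly_resolves_def by blast
qed (fact \<open>W \<subseteq> V\<close>)

end

text \<open>
  Vertex \<open>v\<^sup>i\<^sub>j\<close> is the pair \<open>(i, j)\<close>; the vertex shared by cycles \<open>i\<close> and \<open>i + 1\<close> is represented
  by \<open>(i, junction i)\<close>, so \<open>(i, 1)\<close> is a vertex only for \<open>i = 1\<close>.
\<close>

locale odd_chain_cycle =
  fixes m :: nat and n :: "nat \<Rightarrow> nat"
  assumes two_le_m: "2 \<le> m" and odd_lengths: "\<forall>i\<in>{1..m}. odd (n i) \<and> 5 \<le> n i"
begin

abbreviation "V \<equiv> chain_V m n"
abbreviation "E \<equiv> chain_E m n"

definition half :: "nat \<Rightarrow> nat" where
  "half i = n i div 2"

definition junction :: "nat \<Rightarrow> nat" where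
  "junction i = (n i + 1) div 2 + 1"

text \<open>
  The shadow of a vertex on cycle \<open>i\<close> is the nearest vertex of cycle \<open>i\<close>: itself, or the cut
  vertex (position \<open>1\<close> or \<open>junction i\<close>) through which it is reached.
\<close>

definition shadow :: "nat \<Rightarrow> nat \<times> nat \<Rightarrow> nat" where
  "shadow i p = (if fst p = i then snd p else if fst p < i then 1 else junction i)"

definition chain_dist :: "nat \<times> nat \<Rightarrow> nat \<times> nat \<Rightarrow> nat" where
  "chain_dist p q = (\<Sum>i\<in>{1..m}. cyc_dist (n i) (shadow i p) (shadow i q))"

lemma cycle_length:
  assumes "i \<in> {1..m}"
  shows "n i = 2 * half i + 1 \<and> 2 \<le> half i \<and> junction i = half i + 2"
proof -
  have "odd (n i)" "5 \<le> n i" using odd_lengths assms by auto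
  then obtain q where "n i = 2 * q + 1" "2 \<le> q" by (auto elim!: oddE)
  then show ?thesis unfolding half_def junction_def by auto
qed

lemma canon_eq: "canon n (t, j) = (if j = 1 \<and> 2 \<le> t then (t - 1, junction (t - 1)) else (t, j))"
  unfolding canon_def junction_def by auto

lemma V_eq: "V = {(i, j). 1 \<le> i \<and> i \<le> m \<and> 1 \<le> j \<and> j \<le> n i \<and> (j = 1 \<longrightarrow> i = 1)}"
proof (intro equalityI subsetI)
  fix p assume "p \<in> V"
  then obtain t j where tj: "1 \<le> t" "t \<le> m" "1 \<le> j" "j \<le> n t" "p = canon n (t, j)"
    unfolding chain_V_def by auto
  show "p \<in> {(i, j). 1 \<le> i \<and> i \<le> m \<and> 1 \<le> j \<and> j \<le> n i \<and> (j = 1 \<longrightarrow> i = 1)}"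
  proof (cases "j = 1 \<and> 2 \<le> t")
    case True
    then have "t - 1 \<in> {1..m}" using tj by auto
    then show ?thesis using True tj cycle_length[of "t - 1"] by (auto simp: canon_eq)
  next
    case False
    then show ?thesis using tj by (auto simp: canon_eq)
  qed
next
  fix p assume p: "p \<in> {(i, j). 1 \<le> i \<and> i \<le> m \<and> 1 \<le> j \<and> j \<le> n i \<and> (j = 1 \<longrightarrow> i = 1)}"
  then have "p = canon n p" by (auto simp: canon_eq split: prod.splits)
  then show "p \<in> V" using p unfolding chain_V_def by auto
qed

lemma canon_in_V: "t \<in> {1..m} \<Longrightarrow> 1 \<le> j \<Longrightarrow> j \<le> n t \<Longrightarrow> canon n (t, j) \<in> V"
  unfolding chain_V_def by auto

lemma canon_of_V: "(i, j) \<in> V \<Longrightarrow> canon n (i, j) = (i, j)"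
  by (auto simp: V_eq canon_eq)

lemma shadow_canon: "t \<in> {1..m} \<Longrightarrow> 1 \<le> j \<Longrightarrow>
   shadow i (canon n (t, j)) = (if i = t then j else if i < t then junction i else 1)"
  by (auto simp: canon_eq shadow_def)

lemma shadow_range: "p \<in> V \<Longrightarrow> i \<in> {1..m} \<Longrightarrow> 1 \<le> shadow i p \<and> shadow i p \<le> n i"
  using cycle_length[of i] by (auto simp: V_eq shadow_def)

lemma E_iff: "E u v \<longleftrightarrow> (\<exists>t\<in>{1..m}. \<exists>j\<in>{1..n t}.
      (u = canon n (t, j) \<and> v = canon n (t, cyc_succ (n t) j)) \<or>
      (v = canon n (t, j) \<and> u = canon n (t, cyc_succ (n t) j)))"
  unfolding chain_E_def by (intro bex_cong refl) (simp add: Suc_mod_eq_cyc_succ)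

lemma E_sym: "E u v \<Longrightarrow> E v u"
  unfolding E_iff by blast

lemma E_in_V: "E u v \<Longrightarrow> u \<in> V \<and> v \<in> V"
  unfolding E_iff using canon_in_V cyc_succ_range by (metis atLeastAtMost_iff)

lemma E_succ:
  assumes "t \<in> {1..m}" "1 \<le> j" "j \<le> n t"
  shows "E (canon n (t, j)) (canon n (t, cyc_succ (n t) j))"
proof -
  have "j \<in> {1..n t}" using assms by simp
  then show ?thesis using assms(1) unfolding E_iff by blast
qed

lemma E_pred:
  "t \<in> {1..m} \<Longrightarrow> 1 \<le> j \<Longrightarrow> j \<le> n t \<Longrightarrow> E (canon n (t, j)) (canon n (t, cyc_pred (n t) j))"
  unfolding E_iff using cyc_pred_range cyc_succ_pred by (metis atLeastAtMost_iff)

lemma E_cases: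
  assumes "E u v"
  obtains t j j' where "t \<in> {1..m}" "1 \<le> j" "j \<le> n t" "1 \<le> j'" "j' \<le> n t"
    "cyc_dist (n t) j j' = 1" "u = canon n (t, j)" "v = canon n (t, j')"
proof -
  obtain t j where tj: "t \<in> {1..m}" "j \<in> {1..n t}" and
    uv: "(u = canon n (t, j) \<and> v = canon n (t, cyc_succ (n t) j)) \<or>
         (v = canon n (t, j) \<and> u = canon n (t, cyc_succ (n t) j))"
    using assms E_iff by blast
  moreover have "cyc_dist (n t) j (cyc_succ (n t) j) = 1"
    using cyc_dist_succ[of "n t" j] tj cycle_length[of t] by auto
  ultimately show ?thesis
    using that cyc_succ_range[of j "n t"] cyc_dist_commute[of "n t" j] by (metis atLeastAtMost_iff)
qed

text \<open>Moving along an edge of cycle \<open>t\<close> changes only the shadow on cycle \<open>t\<close>.\<close>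

lemma chain_dist_move:
  assumes "t \<in> {1..m}" "1 \<le> j" "1 \<le> j'"
  shows "chain_dist p (canon n (t, j)) + cyc_dist (n t) (shadow t p) j'
       = chain_dist p (canon n (t, j')) + cyc_dist (n t) (shadow t p) j"
proof -
  let ?f = "\<lambda>j i. cyc_dist (n i) (shadow i p) (shadow i (canon n (t, j)))"
  have "chain_dist p (canon n (t, j)) = ?f j t + sum (?f j) ({1..m} - {t})"
    "chain_dist p (canon n (t, j')) = ?f j' t + sum (?f j') ({1..m} - {t})"
    unfolding chain_dist_def using assms(1) by (simp_all add: sum.remove)
  moreover have "sum (?f j) ({1..m} - {t}) = sum (?f j') ({1..m} - {t})"
    using assms by (intro sum.cong) (simp_all add: shadow_canon)
  ultimately show ?thesis using assms by (simp add: shadow_canon)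
qed

lemma chain_dist_triangle:
  "p \<in> V \<Longrightarrow> q \<in> V \<Longrightarrow> r \<in> V \<Longrightarrow> chain_dist p r \<le> chain_dist p q + chain_dist q r"
  unfolding chain_dist_def sum.distrib[symmetric]
  by (rule sum_mono) (meson cyc_dist_triangle shadow_range)

lemma chain_dist_edge:
  assumes "p \<in> V" "E q r"
  shows "chain_dist p r \<le> chain_dist p q + 1"
proof -
  obtain t j j' where tj: "t \<in> {1..m}" "1 \<le> j" "j \<le> n t" "1 \<le> j'" "j' \<le> n t"
    "cyc_dist (n t) j j' = 1" "q = canon n (t, j)" "r = canon n (t, j')"
    using E_cases[OF assms(2)] by blast
  have "cyc_dist (n t) (shadow t p) j' \<le> cyc_dist (n t) (shadow t p) j + cyc_dist (n t) j j'"
    using cyc_dist_triangle shadow_range[OF assms(1) tj(1)] tj by blast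
  then show ?thesis using chain_dist_move[OF tj(1,2,4), of p] tj by simp
qed

lemma shadow_differs:
  assumes "p \<in> V" "q \<in> V" "p \<noteq> q"
  obtains t j where "t \<in> {1..m}" "1 \<le> j" "j \<le> n t" "q = canon n (t, j)" "shadow t p \<noteq> j"
proof -
  obtain a b c d where pq: "p = (a, b)" "q = (c, d)" by fastforce
  have P: "1 \<le> a" "a \<le> m" "1 \<le> b" "b \<le> n a" "b = 1 \<longrightarrow> a = 1" using assms pq by (auto simp: V_eq)
  have Q: "1 \<le> c" "c \<le> m" "1 \<le> d" "d \<le> n c" "d = 1 \<longrightarrow> c = 1" using assms pq by (auto simp: V_eq)
  have q: "q = canon n (c, d)" using canon_of_V assms(2) pq by simp
  show ?thesis
  proof (cases "c < a \<and> d = junction c")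
    case True
    then have "canon n (c + 1, 1) = q" "shadow (c + 1) p \<noteq> 1" "1 \<le> n (c + 1)"
      using pq P Q cycle_length[of "c + 1"] by (auto simp: canon_eq shadow_def)
    then show ?thesis using that[of "c + 1" 1] True P by auto
  next
    case False
    then have "shadow c p \<noteq> d" using assms pq P Q by (auto simp: shadow_def)
    then show ?thesis using that q Q by auto
  qed
qed

lemma chain_dist_descent:
  assumes "p \<in> V" "q \<in> V" "p \<noteq> q"
  shows "\<exists>r. E q r \<and> chain_dist p r + 1 = chain_dist p q"
proof -
  obtain t j where tj: "t \<in> {1..m}" "1 \<le> j" "j \<le> n t" "q = canon n (t, j)" "shadow t p \<noteq> j"
    using shadow_differs[OF assms] by blast
  have x: "1 \<le> shadow t p" "shadow t p \<le> n t" using shadow_range assms(1) tj(1) by auto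
  from cyc_dist_decrease[OF x tj(2,3,5)] show ?thesis
  proof
    assume "cyc_dist (n t) (shadow t p) (cyc_succ (n t) j) + 1 = cyc_dist (n t) (shadow t p) j"
    then show ?thesis
      using E_succ[OF tj(1-3)] chain_dist_move[OF tj(1,2), of "cyc_succ (n t) j" p]
        cyc_succ_range[OF tj(2,3)] tj(4)
      by (intro exI[of _ "canon n (t, cyc_succ (n t) j)"]) auto
  next
    assume "cyc_dist (n t) (shadow t p) (cyc_pred (n t) j) + 1 = cyc_dist (n t) (shadow t p) j"
    then show ?thesis
      using E_pred[OF tj(1-3)] chain_dist_move[OF tj(1,2), of "cyc_pred (n t) j" p]
        cyc_pred_range[OF tj(2,3)] tj(4)
      by (intro exI[of _ "canon n (t, cyc_pred (n t) j)"]) auto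
  qed
qed

lemma finite_V: "finite V"
proof -
  have "V \<subseteq> {1..m} \<times> (\<Union>i\<in>{1..m}. {1..n i})"
    by (auto simp: V_eq)
  then show ?thesis by (rule finite_subset) simp
qed

sublocale G: graph_distance V E chain_dist
proof -
  have "chain_dist p p = 0" "chain_dist p q = chain_dist q p" for p q
    by (simp_all add: chain_dist_def cyc_dist_commute)
  then show "graph_distance V E chain_dist"
    by unfold_locales (use finite_V E_sym E_in_V chain_dist_triangle chain_dist_edge chain_dist_descent in blast)+
qed

end

context odd_chain_cycle
begin

definition noncut :: "nat \<Rightarrow> nat \<Rightarrow> bool" where
  "noncut i b \<longleftrightarrow>
     i \<in> {1..m} \<and> 1 \<le> b \<and> b \<le> n i \<and> (b = 1 \<longrightarrow> i = 1) \<and> (i < m \<longrightarrow> b \<noteq> junction i)"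

lemma noncut_in_V: "noncut i b \<Longrightarrow> (i, b) \<in> V"
  by (auto simp: noncut_def V_eq)

lemma canon_eq_noncut: "noncut i b \<Longrightarrow> canon n (t, j) = (i, b) \<Longrightarrow> t \<le> m \<Longrightarrow> t = i \<and> j = b"
  by (auto simp: noncut_def canon_eq split: if_splits)

text \<open>
  The neighbours of a non-cut vertex of cycle \<open>i\<close> only differ from it in the shadow on cycle \<open>i\<close>,
  which is already as far as possible from the shadow of \<open>v\<close>.
\<close>

lemma maximally_distant_noncut:
  assumes "noncut i b" "cyc_dist (n i) (shadow i v) b = half i"
  shows "G.maximally_distant (i, b) v"
  unfolding G.maximally_distant_def
proof (intro allI impI)
  fix z assume "E (i, b) z"
  then obtain t j j' where tj: "t \<in> {1..m}" "1 \<le> j" "1 \<le> j'"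
    "(i, b) = canon n (t, j)" "z = canon n (t, j')" by (rule E_cases) blast
  then have "t = i" "j = b" using canon_eq_noncut[OF assms(1) tj(4)[symmetric]] by auto
  moreover have "canon n (i, b) = (i, b)" using canon_of_V noncut_in_V assms(1) by blast
  moreover have "cyc_dist (n i) (shadow i v) j' \<le> half i"
    using cyc_dist_le_half[of "n i"] unfolding half_def by simp
  ultimately show "chain_dist v z \<le> chain_dist v (i, b)"
    using chain_dist_move[OF tj(1-3), of v] tj(5) assms(2) by simp
qed

lemma mmd_antipodal:
  assumes "noncut i x" "noncut i y" "cyc_dist (n i) x y = half i"
  shows "G.mutually_maximally_distant (i, x) (i, y)" "(i, x) \<noteq> (i, y)"
proof -
  have "shadow i (i, x) = x" "shadow i (i, y) = y" by (simp_all add: shadow_def)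
  then show "G.mutually_maximally_distant (i, x) (i, y)"
    using maximally_distant_noncut assms cyc_dist_commute unfolding G.mutually_maximally_distant_def by metis
  show "(i, x) \<noteq> (i, y)" using assms cycle_length[of i] unfolding noncut_def by auto
qed

lemma mmd_across:
  assumes "1 \<le> a" "a < c" "c \<le> m"
    and x: "(a = 1 \<and> x = 1) \<or> x = 2"
    and y: "y = half c + 1 \<or> (c = m \<and> y = half c + 2)"
  shows "G.mutually_maximally_distant (a, x) (c, y)" "(a, x) \<noteq> (c, y)"
proof -
  have A: "n a = 2 * half a + 1" "2 \<le> half a" "junction a = half a + 2"
    and C: "n c = 2 * half c + 1" "2 \<le> half c" "junction c = half c + 2"
    using cycle_length[of a] cycle_length[of c] assms by auto
  have "noncut a x" "noncut c y" using A C x y assms unfolding noncut_def by auto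
  moreover have "shadow a (c, y) = junction a" "shadow c (a, x) = 1" using assms by (simp_all add: shadow_def)
  moreover have "cyc_dist (n a) (junction a) x = half a" "cyc_dist (n c) 1 y = half c"
    using x y A C by (auto simp: cyc_dist_of_le cyc_dist_of_ge min_def)
  ultimately show "G.mutually_maximally_distant (a, x) (c, y)"
    using maximally_distant_noncut unfolding G.mutually_maximally_distant_def by metis
  show "(a, x) \<noteq> (c, y)" using assms by simp
qed

lemma not_maximally_distant_move:
  assumes "t \<in> {1..m}" "1 \<le> j" "j \<le> n t" "j' = cyc_succ (n t) j \<or> j' = cyc_pred (n t) j"
    and "cyc_dist (n t) (shadow t v) j < cyc_dist (n t) (shadow t v) j'"
  shows "\<not> G.maximally_distant (canon n (t, j)) v"
proof -
  have "1 \<le> j'" "E (canon n (t, j)) (canon n (t, j'))"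
    using assms(4) E_succ[OF assms(1-3)] E_pred[OF assms(1-3)]
      cyc_succ_range[OF assms(2,3)] cyc_pred_range[OF assms(2,3)] by auto
  then show ?thesis
    using G.not_maximally_distantI chain_dist_move[OF assms(1,2), of j' v] assms(5) by simp
qed

lemma junction_not_maximally_distant:
  assumes "1 \<le> a" "a < m" "v \<in> V"
  shows "\<not> G.maximally_distant (a, junction a) v"
proof -
  have A: "n a = 2 * half a + 1" "2 \<le> half a" "junction a = half a + 2"
    and A': "n (a + 1) = 2 * half (a + 1) + 1" "2 \<le> half (a + 1)"
    using cycle_length[of a] cycle_length[of "a + 1"] assms by auto
  show ?thesis
  proof (cases "fst v \<le> a")
    case True
    then have "shadow (a + 1) v = 1" by (simp add: shadow_def)
    moreover have "canon n (a + 1, 1) = (a, junction a)" "cyc_succ (n (a + 1)) 1 = 2"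
      using A' assms by (simp_all add: canon_eq cyc_succ_def)
    ultimately show ?thesis
      using not_maximally_distant_move[of "a + 1" 1 2 v] A' assms by (simp add: cyc_dist_of_le)
  next
    case False
    then have "shadow a v = junction a" by (simp add: shadow_def)
    moreover have "canon n (a, junction a) = (a, junction a)" "cyc_pred (n a) (junction a) = half a + 1"
      using A assms by (simp_all add: canon_eq cyc_pred_def)
    ultimately show ?thesis
      using not_maximally_distant_move[of a "junction a" "half a + 1" v] A assms
      by (simp add: cyc_dist_of_ge)
  qed
qed

lemma not_maximally_distant_same_cycle:
  assumes "i \<in> {1..m}" "2 \<le> b" "b \<le> half i + 1" "2 \<le> d" "d \<le> half i + 1" "b \<noteq> d"
  shows "\<not> G.maximally_distant (i, b) (i, d)"
proof -
  have A: "n i = 2 * half i + 1" using cycle_length assms by auto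
  have "canon n (i, b) = (i, b)" "shadow i (i, d) = d" using assms by (simp_all add: canon_eq shadow_def)
  show ?thesis
  proof (cases "b < d")
    case True
    have "cyc_pred (n i) b = b - 1" using assms by (simp add: cyc_pred_def)
    moreover have "cyc_dist (n i) d b < cyc_dist (n i) d (b - 1)"
      using True assms cyc_dist_eq_diff[OF _ _ A, of b d] cyc_dist_eq_diff[OF _ _ A, of "b - 1" d]
      by (simp add: cyc_dist_commute[of "n i" d])
    ultimately show ?thesis
      using not_maximally_distant_move[of i b "b - 1" "(i, d)"] \<open>shadow i (i, d) = d\<close>
        \<open>canon n (i, b) = (i, b)\<close> assms A by simp
  next
    case False
    have "cyc_succ (n i) b = b + 1" using assms A by (simp add: cyc_succ_def)
    moreover have "cyc_dist (n i) d b < cyc_dist (n i) d (b + 1)"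
      using False assms cyc_dist_eq_diff[OF _ _ A, of d b] cyc_dist_eq_diff[OF _ _ A, of d "b + 1"] by simp
    ultimately show ?thesis
      using not_maximally_distant_move[of i b "b + 1" "(i, d)"] \<open>shadow i (i, d) = d\<close>
        \<open>canon n (i, b) = (i, b)\<close> assms A by simp
  qed
qed

lemma not_maximally_distant_across:
  assumes "a < c" "c \<le> m" "2 \<le> d" "d \<le> half c"
  shows "\<not> G.maximally_distant (c, d) (a, x)"
proof -
  have A: "n c = 2 * half c + 1" using cycle_length[of c] assms by auto
  have "canon n (c, d) = (c, d)" "shadow c (a, x) = 1" "cyc_succ (n c) d = d + 1"
    using assms A by (simp_all add: canon_eq shadow_def cyc_succ_def)
  then show ?thesis
    using not_maximally_distant_move[of c d "d + 1" "(a, x)"] cyc_dist_eq_diff[OF _ _ A] assms A by simp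
qed

end

context odd_chain_cycle
begin

definition cycle_quota :: "nat \<Rightarrow> nat" where
  "cycle_quota i = (if i = 1 \<or> i = m then half i else half i - 1)"

lemma sum_cycle_quota:
  "(\<Sum>i\<in>{1..m}. cycle_quota i) + (m - 1)
     = m - 1 + n 1 div 2 + n m div 2 + (\<Sum>i = 2..m - 1. (n i - 2) div 2)"
proof -
  have "{1..m} = insert 1 (insert m {2..m - 1})" using two_le_m by auto
  then have "(\<Sum>i\<in>{1..m}. cycle_quota i) = half 1 + half m + (\<Sum>i = 2..m - 1. cycle_quota i)"
    using two_le_m by (simp add: cycle_quota_def)
  also have "(\<Sum>i = 2..m - 1. cycle_quota i) = (\<Sum>i = 2..m - 1. (n i - 2) div 2)"
  proof (rule sum.cong)
    fix i assume i: "i \<in> {2..m - 1}"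
    then have "n i = 2 * half i + 1" "2 \<le> half i" using cycle_length by auto
    then show "cycle_quota i = (n i - 2) div 2" using i unfolding cycle_quota_def by auto
  qed simp
  finally show ?thesis unfolding half_def by simp
qed

text \<open>
  The basis omits from cycle \<open>i\<close> only positions \<open>2, \<dots>, k\<^sub>i + 1\<close> (\<open>2, \<dots>, k\<^sub>i\<close> for \<open>i > 1\<close>), so that
  no two omitted vertices are mutually maximally distant.
\<close>

definition basis_positions :: "nat \<Rightarrow> nat set" where
  "basis_positions i =
    (if i = m then {half i + 1..n i}
     else if i = 1 then insert 1 {half i + 3..n i}
     else insert (half i + 1) {half i + 3..n i})"

definition chain_basis :: "(nat \<times> nat) set" where
  "chain_basis = Sigma {1..m} basis_positions"

lemma chain_basis_subset_V: "chain_basis \<subseteq> V"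
proof
  fix p assume "p \<in> chain_basis"
  then obtain i j where p: "p = (i, j)" "i \<in> {1..m}" "j \<in> basis_positions i"
    unfolding chain_basis_def by auto
  then show "p \<in> V" using cycle_length[of i] two_le_m
    unfolding V_eq basis_positions_def by (auto split: if_splits)
qed

lemma card_basis_positions:
  assumes "i \<in> {1..m}"
  shows "card (basis_positions i) = cycle_quota i + (if i = 1 then 0 else 1)"
proof -
  have "n i = 2 * half i + 1" "2 \<le> half i" using cycle_length assms by auto
  moreover have "1 \<notin> {half i + 3..n i}" "half i + 1 \<notin> {half i + 3..n i}" by auto
  ultimately show ?thesis using two_le_m unfolding basis_positions_def cycle_quota_def by auto
qed

lemma card_chain_basis: "card chain_basis = (\<Sum>i\<in>{1..m}. cycle_quota i) + (m - 1)"
proof -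
  have "card chain_basis = (\<Sum>i\<in>{1..m}. card (basis_positions i))"
    unfolding chain_basis_def by (rule card_SigmaI) (auto simp: basis_positions_def)
  also have "\<dots> = (\<Sum>i\<in>{1..m}. cycle_quota i + (if i = 1 then 0 else 1))"
    by (rule sum.cong) (simp_all add: card_basis_positions)
  also have "\<dots> = (\<Sum>i\<in>{1..m}. cycle_quota i) + card ({1..m} - {1})"
    by (simp add: sum.distrib sum.If_cases Diff_eq Int_commute)
  finally show ?thesis using two_le_m by (simp add: card_Diff_singleton)
qed

lemma not_in_chain_basis:
  assumes "(i, b) \<in> V" "(i, b) \<notin> chain_basis" "\<not> (i < m \<and> b = junction i)"
  shows "2 \<le> b \<and> b \<le> half i + 1 \<and> (2 \<le> i \<longrightarrow> b \<le> half i)"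
proof -
  have i: "1 \<le> i" "i \<le> m" "1 \<le> b" "b \<le> n i" "b = 1 \<longrightarrow> i = 1" using assms(1) by (auto simp: V_eq)
  moreover have "n i = 2 * half i + 1" "junction i = half i + 2" using cycle_length[of i] i by auto
  moreover have "b \<notin> basis_positions i" using assms(2) i unfolding chain_basis_def by auto
  ultimately show ?thesis using two_le_m assms(3) unfolding basis_positions_def by (auto split: if_splits)
qed

lemma chain_basis_meets_mmd:
  assumes "u \<in> V" "v \<in> V" "u \<noteq> v" "G.mutually_maximally_distant u v"
  shows "u \<in> chain_basis \<or> v \<in> chain_basis"
proof (rule ccontr)
  assume "\<not> (u \<in> chain_basis \<or> v \<in> chain_basis)"
  moreover obtain a b c d where uv: "u = (a, b)" "v = (c, d)" by fastforce
  moreover have ac: "1 \<le> a" "a \<le> m" "1 \<le> c" "c \<le> m" using assms uv by (auto simp: V_eq)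
  ultimately have "2 \<le> b \<and> b \<le> half a + 1 \<and> (2 \<le> a \<longrightarrow> b \<le> half a)"
    "2 \<le> d \<and> d \<le> half c + 1 \<and> (2 \<le> c \<longrightarrow> d \<le> half c)"
    using not_in_chain_basis junction_not_maximally_distant assms
    unfolding G.mutually_maximally_distant_def by metis+
  then consider "a = c" | "a < c" | "c < a" by linarith
  then show False
    using not_maximally_distant_same_cycle[of a b d] not_maximally_distant_across[of a c d b]
      not_maximally_distant_across[of c a b d] \<open>2 \<le> b \<and> _\<close> \<open>2 \<le> d \<and> _\<close> ac assms uv
    unfolding G.mutually_maximally_distant_def by (cases; auto)
qed

lemma strong_resolving_set_chain_basis: "strong_resolving_set V E chain_basis"
  using G.strong_resolving_setI_mmd[OF chain_basis_subset_V] chain_basis_meets_mmd by blast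

end

text \<open>A lower bound for the size of a vertex cover of a path, counting the covered ends twice.\<close>

lemma card_vertex_cover_path:
  fixes s :: "nat \<Rightarrow> 'b"
  assumes "inj_on s {a..a + d}" "\<forall>t. a \<le> t \<and> t < a + d \<longrightarrow> s t \<in> A \<or> s (Suc t) \<in> A"
  shows "(d + 1 + (if s a \<in> A then 1 else 0) + (if s (a + d) \<in> A then 1 else 0)) div 2
           \<le> card (A \<inter> s ` {a..a + d})"
  using assms
proof (induction d)
  case 0
  have "A \<inter> s ` {a..a} = (if s a \<in> A then {s a} else {})" by auto
  then show ?case by simp
next
  case (Suc d)
  have "inj_on s {a..a + d}" using Suc.prems(1) by (rule inj_on_subset) auto
  then have IH: "(d + 1 + (if s a \<in> A then 1 else 0) + (if s (a + d) \<in> A then 1 else 0)) div 2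
                   \<le> card (A \<inter> s ` {a..a + d})"
    using Suc.IH Suc.prems(2) by auto
  have "s (a + Suc d) \<notin> s ` {a..a + d}"
    using inj_onD[OF Suc.prems(1)] by fastforce
  moreover have "A \<inter> s ` {a..a + Suc d} =
      (if s (a + Suc d) \<in> A then insert (s (a + Suc d)) (A \<inter> s ` {a..a + d}) else A \<inter> s ` {a..a + d})"
    by (auto simp: atLeastAtMostSuc_conv)
  ultimately have "card (A \<inter> s ` {a..a + Suc d}) =
      card (A \<inter> s ` {a..a + d}) + (if s (a + Suc d) \<in> A then 1 else 0)"
    by simp
  moreover have "s (a + d) \<in> A \<or> s (a + Suc d) \<in> A" using Suc.prems(2) by auto
  ultimately show ?case using IH by (auto split: if_splits)
qed

text \<open>
  The antipodal tour of \<open>C\<^sub>2\<^sub>K\<^sub>+\<^sub>1\<close>: consecutive terms are at cyclic distance \<open>K\<close>, and the terms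
  for \<open>t = 1, \<dots>, 2K + 1\<close> are all positions, ending with position \<open>1\<close>.
\<close>

definition antipodal_tour :: "nat \<Rightarrow> nat \<Rightarrow> nat" where
  "antipodal_tour K t = (if t = 2 * K + 1 then 1 else if even t then t div 2 + 1 else t div 2 + K + 2)"

lemma antipodal_tour_range: "t \<le> 2 * K + 1 \<Longrightarrow> 1 \<le> antipodal_tour K t \<and> antipodal_tour K t \<le> 2 * K + 1"
  unfolding antipodal_tour_def by (auto elim!: evenE oddE)

lemma antipodal_tour_values:
  assumes "1 \<le> K"
  shows "antipodal_tour K 1 = K + 2" "antipodal_tour K 2 = 2"
    "antipodal_tour K (2 * K) = K + 1" "antipodal_tour K (2 * K + 1) = 1"
  using assms unfolding antipodal_tour_def by auto

lemma antipodal_tour_neq_1: "1 \<le> t \<Longrightarrow> t \<le> 2 * K \<Longrightarrow> antipodal_tour K t \<noteq> 1"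
  unfolding antipodal_tour_def by (auto elim!: evenE oddE)

lemma antipodal_tour_neq_K_plus_2: "2 \<le> t \<Longrightarrow> t \<le> 2 * K + 1 \<Longrightarrow> antipodal_tour K t \<noteq> K + 2"
  unfolding antipodal_tour_def by (auto elim!: evenE oddE)

lemma cyc_dist_antipodal_tour:
  assumes "t < 2 * K + 1"
  shows "cyc_dist (2 * K + 1) (antipodal_tour K t) (antipodal_tour K (Suc t)) = K"
proof (cases "even t")
  case True
  then obtain r where "t = 2 * r" by (auto elim: evenE)
  then show ?thesis
    using assms by (cases "t = 2 * K") (auto simp: antipodal_tour_def cyc_dist_of_le cyc_dist_of_ge min_def)
next
  case False
  then obtain r where "t = 2 * r + 1" by (auto elim: oddE)
  then show ?thesis
    using assms by (auto simp: antipodal_tour_def cyc_dist_of_ge min_def)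
qed

lemma inj_on_antipodal_tour: "inj_on (antipodal_tour K) {1..2 * K + 1}"
proof (rule inj_onI)
  have decode: "t = (let p = antipodal_tour K t in
      if p = 1 then 2 * K + 1 else if p \<le> K + 1 then 2 * (p - 1) else 2 * (p - K - 2) + 1)"
    if "t \<in> {1..2 * K + 1}" for t
    using that unfolding antipodal_tour_def Let_def by (cases "even t") (auto elim!: evenE oddE)
  fix x y assume "x \<in> {1..2 * K + 1}" "y \<in> {1..2 * K + 1}" "antipodal_tour K x = antipodal_tour K y"
  then show "x = y" using decode by metis
qed

context odd_chain_cycle
begin

text \<open>
  On cycle \<open>i\<close> the tour is restricted to \<open>t \<in> {tour_start i..tour_end i}\<close>, which leaves out
  exactly the positions of the cut vertices (\<open>t = 1\<close> gives \<open>junction i\<close>, \<open>t = n i\<close> gives \<open>1\<close>).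
\<close>

definition tour_start :: "nat \<Rightarrow> nat" where
  "tour_start i = (if i = m then 1 else 2)"

definition tour_end :: "nat \<Rightarrow> nat" where
  "tour_end i = (if i = 1 then 2 * half i + 1 else 2 * half i)"

lemma noncut_antipodal_tour:
  assumes "i \<in> {1..m}" "tour_start i \<le> t" "t \<le> tour_end i"
  shows "noncut i (antipodal_tour (half i) t)"
proof -
  have A: "n i = 2 * half i + 1" "junction i = half i + 2" using cycle_length assms by auto
  have t: "1 \<le> t" "t \<le> 2 * half i + 1" using assms unfolding tour_start_def tour_end_def by (auto split: if_splits)
  then have "antipodal_tour (half i) t = 1 \<longrightarrow> i = 1"
    using antipodal_tour_neq_1[OF t(1)] assms(3) unfolding tour_end_def by (auto split: if_splits)
  moreover have "i < m \<longrightarrow> antipodal_tour (half i) t \<noteq> junction i"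
    using antipodal_tour_neq_K_plus_2[OF _ t(2)] assms(2) A unfolding tour_start_def by auto
  ultimately show ?thesis using assms(1) antipodal_tour_range[OF t(2)] A unfolding noncut_def by auto
qed

lemma strong_resolving_set_covers_tour_step:
  assumes "strong_resolving_set V E W" "i \<in> {1..m}" "tour_start i \<le> t" "t < tour_end i"
  shows "(i, antipodal_tour (half i) t) \<in> W \<or> (i, antipodal_tour (half i) (Suc t)) \<in> W"
proof -
  have "n i = 2 * half i + 1" using cycle_length assms by auto
  moreover have "t < 2 * half i + 1" using assms(4) unfolding tour_end_def by (auto split: if_splits)
  moreover have "noncut i (antipodal_tour (half i) t)" "noncut i (antipodal_tour (half i) (Suc t))"
    using noncut_antipodal_tour assms by simp_all
  ultimately show ?thesis
    using G.strong_resolving_set_meets_mmd[OF assms(1) noncut_in_V noncut_in_V] mmd_antipodal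
      cyc_dist_antipodal_tour by metis
qed

definition left_end_covered :: "(nat \<times> nat) set \<Rightarrow> nat \<Rightarrow> bool" where
  "left_end_covered W i = (if i = 1 then (1, 1) \<in> W \<and> (1, 2) \<in> W else (i, 2) \<in> W)"

definition right_end_covered :: "(nat \<times> nat) set \<Rightarrow> nat \<Rightarrow> bool" where
  "right_end_covered W i =
    (if i = m then (m, half m + 1) \<in> W \<and> (m, half m + 2) \<in> W else (i, half i + 1) \<in> W)"

definition end_covered :: "(nat \<times> nat) set \<Rightarrow> nat \<Rightarrow> bool" where
  "end_covered W i =
    (if i = 1 then left_end_covered W 1
     else if i = m then right_end_covered W m
     else left_end_covered W i \<or> right_end_covered W i)"

lemma card_cycle_part_ge:
  assumes "strong_resolving_set V E W" "i \<in> {1..m}"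
  shows "cycle_quota i + (if end_covered W i then 1 else 0)
           \<le> card ({j. (i, j) \<in> W} \<inter> antipodal_tour (half i) ` {tour_start i..tour_end i})"
proof -
  let ?s = "antipodal_tour (half i)" and ?a = "tour_start i" and ?b = "tour_end i"
  have A: "n i = 2 * half i + 1" "2 \<le> half i" using cycle_length assms by auto
  then have ab: "?a \<le> ?b" "?a + (?b - ?a) = ?b" "{?a..?b} \<subseteq> {1..2 * half i + 1}"
    unfolding tour_start_def tour_end_def by auto
  then have "inj_on ?s {?a..?a + (?b - ?a)}"
    using inj_on_subset[OF inj_on_antipodal_tour] by metis
  from card_vertex_cover_path[OF this, of "{j. (i, j) \<in> W}"]
  have "(?b - ?a + 1 + (if (i, ?s ?a) \<in> W then 1 else 0) + (if (i, ?s ?b) \<in> W then 1 else 0)) div 2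
          \<le> card ({j. (i, j) \<in> W} \<inter> ?s ` {?a..?b})"
    using strong_resolving_set_covers_tour_step[OF assms] ab by auto
  then show ?thesis
    using A two_le_m antipodal_tour_values[of "half i"]
    unfolding tour_start_def tour_end_def end_covered_def left_end_covered_def right_end_covered_def
      cycle_quota_def
    by (auto split: if_splits)
qed

lemma left_or_right_end_covered:
  assumes "strong_resolving_set V E W" "1 \<le> a" "a < c" "c \<le> m"
  shows "left_end_covered W a \<or> right_end_covered W c"
proof (rule ccontr)
  assume "\<not> (left_end_covered W a \<or> right_end_covered W c)"
  then obtain x y where x: "(a = 1 \<and> x = 1) \<or> x = 2" "(a, x) \<notin> W"
    and y: "y = half c + 1 \<or> (c = m \<and> y = half c + 2)" "(c, y) \<notin> W"
    unfolding left_end_covered_def right_end_covered_def by (metis (full_types))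
  have "n a = 2 * half a + 1" "2 \<le> half a" "n c = 2 * half c + 1" "2 \<le> half c"
    using cycle_length[of a] cycle_length[of c] assms by auto
  then have "(a, x) \<in> V" "(c, y) \<in> V" using x(1) y(1) assms unfolding V_eq by auto
  then show False
    using G.strong_resolving_set_meets_mmd[OF assms(1)] mmd_across[OF assms(2-4) x(1) y(1)] x y by blast
qed

lemma card_end_covered:
  assumes "strong_resolving_set V E W"
  shows "m - 1 \<le> card {i \<in> {1..m}. end_covered W i}"
proof -
  let ?S = "{i \<in> {1..m}. \<not> end_covered W i}"
  have "i = j" if "i \<in> ?S" "j \<in> ?S" for i j
  proof (rule ccontr)
    assume "i \<noteq> j"
    then show False
      using left_or_right_end_covered[OF assms, of i j] left_or_right_end_covered[OF assms, of j i]
        that two_le_m unfolding end_covered_def by (cases "i < j") (auto split: if_splits)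
  qed
  then have "card ?S \<le> 1" using card_le_Suc0_iff_eq[of ?S] by auto
  moreover have "{1..m} = {i \<in> {1..m}. end_covered W i} \<union> ?S" by auto
  then have "card {1..m} = card {i \<in> {1..m}. end_covered W i} + card ?S"
    by (metis (no_types, lifting) card_Un_disjoint disjoint_iff finite_Un finite_atLeastAtMost mem_Collect_eq)
  ultimately show ?thesis by simp
qed

lemma card_strong_resolving_set_ge:
  assumes "finite W" "strong_resolving_set V E W"
  shows "(\<Sum>i\<in>{1..m}. cycle_quota i) + (m - 1) \<le> card W"
proof -
  define P where "P i = {j. (i, j) \<in> W} \<inter> antipodal_tour (half i) ` {tour_start i..tour_end i}" for i
  have "(\<Sum>i\<in>{1..m}. cycle_quota i) + (m - 1)
          \<le> (\<Sum>i\<in>{1..m}. cycle_quota i) + card {i \<in> {1..m}. end_covered W i}"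
    using card_end_covered[OF assms(2)] by simp
  also have "\<dots> = (\<Sum>i\<in>{1..m}. cycle_quota i + (if end_covered W i then 1 else 0))"
    by (simp add: sum.distrib sum.inter_filter[symmetric])
  also have "\<dots> \<le> (\<Sum>i\<in>{1..m}. card (P i))"
    unfolding P_def by (rule sum_mono) (rule card_cycle_part_ge[OF assms(2)])
  also have "\<dots> = card (Sigma {1..m} P)"
    by (rule card_SigmaI[symmetric]) (auto simp: P_def)
  also have "\<dots> \<le> card W"
    using assms(1) by (rule card_mono) (auto simp: P_def)
  finally show ?thesis .
qed

end

theorem theorem3p8:
  fixes m :: nat and n :: "nat \<Rightarrow> nat"
  assumes "m \<ge> 2"
    and "\<forall>i\<in>{1..m}. odd (n i) \<and> n i \<ge> 5"
  shows "sdim (chain_V m n) (chain_E m n) =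
           m - 1 + n 1 div 2 + n m div 2 + (\<Sum>i = 2..m - 1. (n i - 2) div 2)"
proof -
  interpret odd_chain_cycle m n
    using assms by unfold_locales auto
  have "finite chain_basis"
    using finite_subset[OF chain_basis_subset_V finite_V] .
  show ?thesis
    unfolding sdim_def sum_cycle_quota[symmetric]
  proof (rule Least_equality)
    show "\<exists>W. finite W \<and> strong_resolving_set V E W \<and> card W = (\<Sum>i\<in>{1..m}. cycle_quota i) + (m - 1)"
      using \<open>finite chain_basis\<close> strong_resolving_set_chain_basis card_chain_basis by blast
  next
    fix k assume "\<exists>W. finite W \<and> strong_resolving_set V E W \<and> card W = k"
    then show "(\<Sum>i\<in>{1..m}. cycle_quota i) + (m - 1) \<le> k"
      using card_strong_resolving_set_ge by blast
  qed
qed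

end
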